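(* Let $V$ be a complex normed vector space and $L\in l^{\infty}(V)^*$. The following are equivalent: (i) $L$ is a Banach limit functional; (ii) $|L(x)|\le p(x)$ for all $x\in l^{\infty}(V)$.
   Context: $\mathbb{N}=\{1,2,3,\dots\}$. $l^{\infty}(V)$ is the space of bounded sequences $x=\{x_n\}_{n=1}^\infty$ in $V$ with norm $\|x\|_\infty=\sup_n\|x_n\|_V$. $T$ is the left shift: $T\{x_1,x_2,x_3,\dots\}=\{x_2,x_3,\dots\}$. A Banach limit functional is a bounded linear functional $L$ on $l^\infty(V)$ such that $\|L\|\le 1$ and $L(Tx)=L(x)$ for all $x\in l^\infty(V)$. For $x\in l^\infty(V)$, $p(x):=\lim_{n\to\infty}\left(\sup_{j\in\mathbb{N}}\frac1n\left\|\sum_{i=0}^{n-1}x_{i+j}\right\|_V\right)$ (this limit exists). *)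

theory Defs
  imports "HOL-Analysis.Analysis"
begin

text \<open>Complex normed vector spaces: a real normed vector space carrying a compatible
  complex scalar multiplication (the HOL distribution has no such class).\<close>
class complex_normed_vector = real_normed_vector +
  fixes scaleC :: "complex \<Rightarrow> 'a \<Rightarrow> 'a" (infixr \<open>*\<^sub>C\<close> 75)
  assumes scaleC_add_right: "c *\<^sub>C (x + y) = c *\<^sub>C x + c *\<^sub>C y"
    and scaleC_add_left: "(b + c) *\<^sub>C x = b *\<^sub>C x + c *\<^sub>C x"
    and scaleC_scaleC: "b *\<^sub>C (c *\<^sub>C x) = (b * c) *\<^sub>C x"
    and scaleC_one: "1 *\<^sub>C x = x"
    and scaleC_of_real: "of_real r *\<^sub>C x = r *\<^sub>R x"
    and norm_scaleC: "norm (c *\<^sub>C x) = cmod c * norm x"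

definition linf :: "(nat \<Rightarrow> 'a::real_normed_vector) set" where
  "linf = {x. Bseq x}"

definition sup_norm :: "(nat \<Rightarrow> 'a::real_normed_vector) \<Rightarrow> real" where
  "sup_norm x = (SUP n. norm (x n))"

definition lshift :: "(nat \<Rightarrow> 'a) \<Rightarrow> (nat \<Rightarrow> 'a)" where
  "lshift x = (\<lambda>n. x (Suc n))"

text \<open>Elements of the dual l-infinity(V)^*: bounded complex-linear functionals
  (only their values on l-infinity(V) matter).\<close>
definition linf_dual :: "((nat \<Rightarrow> 'a::complex_normed_vector) \<Rightarrow> complex) set" where
  "linf_dual = {L.
     (\<forall>x\<in>linf. \<forall>y\<in>linf. L (\<lambda>n. x n + y n) = L x + L y) \<and>
     (\<forall>x\<in>linf. \<forall>c. L (\<lambda>n. c *\<^sub>C x n) = c * L x) \<and>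
     (\<exists>K. \<forall>x\<in>linf. cmod (L x) \<le> K * sup_norm x)}"

definition banach_limit :: "((nat \<Rightarrow> 'a::complex_normed_vector) \<Rightarrow> complex) \<Rightarrow> bool" where
  "banach_limit L \<longleftrightarrow>
     L \<in> linf_dual \<and>
     (\<forall>x\<in>linf. cmod (L x) \<le> sup_norm x) \<and>
     (\<forall>x\<in>linf. L (lshift x) = L x)"

definition p_func :: "(nat \<Rightarrow> 'a::real_normed_vector) \<Rightarrow> real" where
  "p_func x = lim (\<lambda>n. SUP j. norm (\<Sum>i<n. x (i + j)) / real n)"

end

theory Submission
  imports Defs
begin

(* Write W(x,n) = sup_j ||x_j + ... + x_(j+n-1)|| for the largest window sum of length n.
   W(x,.) is subadditive, so Fekete's lemma shows that W(x,n)/n converges; its limit is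
   p(x).

   (i) => (ii): a shift-invariant L takes the same value on x and on the averaged sequence
   j |-> (1/n)(x_j + ... + x_(j+n-1)), whose sup norm is W(x,n)/n; so |L x| <= W(x,n)/n
   for every n >= 1, and hence |L x| <= p(x).
   (ii) => (i): p(x) <= ||x|| gives ||L|| <= 1, and the window sums of the difference
   sequence Tx - x telescope and stay bounded, so p(Tx - x) = 0 and L(Tx) = L(x). *)

section \<open>Fekete's lemma\<close>

lemma subadditive_blocks:
  fixes b :: "nat \<Rightarrow> real"
  assumes sub: "\<And>m n. b (m + n) \<le> b m + b n"
  shows "b (q * m + r) \<le> real q * b m + b r"
proof (induction q)
  case 0
  then show ?case by simp
next
  case (Suc q)
  have "b (Suc q * m + r) = b (m + (q * m + r))" by (simp add: algebra_simps)
  also have "\<dots> \<le> b m + b (q * m + r)" by (rule sub)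
  also have "\<dots> \<le> real (Suc q) * b m + b r" using Suc by (simp add: algebra_simps)
  finally show ?case .
qed

lemma subadditive_ratio_estimate:
  fixes b :: "nat \<Rightarrow> real"
  assumes sub: "\<And>m n. b (m + n) \<le> b m + b n" and nonneg: "\<And>n. 0 \<le> b n"
    and m: "m \<ge> 1" and n: "n \<ge> 1"
  shows "b n / real n \<le> b m / real m + (\<Sum>k<m. b k) / real n"
proof -
  let ?q = "n div m" and ?r = "n mod m"
  have rest: "b ?r \<le> (\<Sum>k<m. b k)"
    using m nonneg by (intro member_le_sum) auto
  have "b n \<le> real ?q * b m + b ?r"
    using subadditive_blocks[of b, OF sub, of ?q m ?r] by simp
  moreover have "real ?q * real m \<le> real n"
    by (metis of_nat_le_iff of_nat_mult div_times_less_eq_dividend)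
  then have "real ?q * real m * b m \<le> real n * b m"
    using nonneg[of m] by (rule mult_right_mono)
  then have "real ?q * b m \<le> real n * (b m / real m)"
    using m by (simp add: field_simps)
  ultimately have "b n \<le> real n * (b m / real m) + (\<Sum>k<m. b k)"
    using rest by linarith
  then show ?thesis using n by (simp add: field_simps)
qed

text \<open>Fekete's lemma: for a nonnegative subadditive sequence, b(n)/n converges
  (to the infimum of the ratios).\<close>
lemma fekete_subadditive:
  fixes b :: "nat \<Rightarrow> real"
  assumes sub: "\<And>m n. b (m + n) \<le> b m + b n" and nonneg: "\<And>n. 0 \<le> b n"
  shows "convergent (\<lambda>n. b n / real n)"
proof -
  define l where "l = (INF n\<in>{1..}. b n / real n)"
  have bdd: "bdd_below ((\<lambda>n. b n / real n) ` {1..})"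
    using nonneg by (intro bdd_belowI[of _ 0]) auto
  have lower: "l \<le> b n / real n" if "n \<ge> 1" for n
    unfolding l_def using that bdd by (intro cINF_lower) auto
  have "(\<lambda>n. b n / real n) \<longlonglongrightarrow> l"
  proof (rule LIMSEQ_I)
    fix e :: real
    assume e: "e > 0"
    have "(INF n\<in>{1..}. b n / real n) < l + e / 2" using e l_def by simp
    then obtain m where m: "m \<ge> 1" "b m / real m < l + e / 2"
      using cINF_less_iff[of "{1..}", OF _ bdd] by auto
    define C where "C = (\<Sum>k<m. b k)"
    obtain N :: nat where N: "real N > 2 * C / e" using reals_Archimedean2 by blast
    have "norm (b n / real n - l) < e" if n: "n \<ge> max 1 N" for n
    proof -
      have "real N \<le> real n" using n by simp
      then have "2 * C / e < real n" using N by linarith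
      then have "2 * C < e * real n" using e by (simp add: field_simps)
      then have "C / real n < e / 2" using n by (simp add: field_simps)
      moreover have "b n / real n \<le> b m / real m + C / real n"
        unfolding C_def using subadditive_ratio_estimate[of b, OF sub nonneg m(1), of n] n by simp
      ultimately have "b n / real n < l + e" using m(2) by linarith
      then show ?thesis using lower[of n] n by simp
    qed
    then show "\<exists>N. \<forall>n\<ge>N. norm (b n / real n - l) < e" by blast
  qed
  then show ?thesis by (rule convergentI)
qed

lemma linfI: "(\<And>n. norm (x n) \<le> M) \<Longrightarrow> x \<in> linf"
  unfolding linf_def by (auto intro: BseqI')

lemma linfE:
  assumes "x \<in> linf"
  obtains M where "\<And>n. norm (x n) \<le> M"
  using assms unfolding linf_def Bseq_def by blast

lemma linf_add:
  assumes "x \<in> linf" and "y \<in> linf"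
  shows "(\<lambda>n. x n + y n) \<in> linf"
proof -
  obtain M N where "\<And>n. norm (x n) \<le> M" "\<And>n. norm (y n) \<le> N" using assms by (metis linfE)
  then show ?thesis by (intro linfI[of _ "M + N"]) (meson add_mono norm_triangle_le)
qed

lemma linf_diff:
  assumes "x \<in> linf" and "y \<in> linf"
  shows "(\<lambda>n. x n - y n) \<in> linf"
proof -
  obtain M N where "\<And>n. norm (x n) \<le> M" "\<And>n. norm (y n) \<le> N" using assms by (metis linfE)
  then show ?thesis by (intro linfI[of _ "M + N"]) (meson add_mono norm_triangle_le_diff)
qed

lemma linf_scaleR:
  assumes "x \<in> linf"
  shows "(\<lambda>n. r *\<^sub>R x n) \<in> linf"
proof -
  obtain M where "\<And>n. norm (x n) \<le> M" using assms by (metis linfE)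
  then show ?thesis by (intro linfI[of _ "\<bar>r\<bar> * M"]) (simp add: mult_left_mono)
qed

lemma linf_offset: "x \<in> linf \<Longrightarrow> (\<lambda>k. x (i + k)) \<in> linf"
  by (metis linfE linfI)

lemma linf_lshift: "x \<in> linf \<Longrightarrow> lshift x \<in> linf"
  unfolding lshift_def by (metis linfE linfI)

lemma linf_sum:
  fixes y :: "nat \<Rightarrow> nat \<Rightarrow> 'a::real_normed_vector"
  shows "(\<And>i. y i \<in> linf) \<Longrightarrow> (\<lambda>k. \<Sum>i<n. y i k) \<in> linf"
  by (induction n) (simp_all add: linfI[of _ 0] linf_add)

lemma sup_norm_upper:
  assumes "x \<in> linf"
  shows "norm (x n) \<le> sup_norm x"
proof -
  obtain M where "\<And>n. norm (x n) \<le> M" using assms by (metis linfE)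
  then have "bdd_above (range (\<lambda>n. norm (x n)))" by (rule bdd_aboveI2)
  then show ?thesis unfolding sup_norm_def by (rule cSUP_upper2) auto
qed

lemma sup_norm_least: "(\<And>n. norm (x n) \<le> B) \<Longrightarrow> sup_norm x \<le> B"
  unfolding sup_norm_def by (rule cSUP_least) auto

section \<open>Window sums and the functional p\<close>

definition max_window :: "(nat \<Rightarrow> 'a::real_normed_vector) \<Rightarrow> nat \<Rightarrow> real" where
  "max_window x n = (SUP j. norm (\<Sum>i<n. x (i + j)))"

text \<open>A window sum of n terms bounded by M has norm at most n M; in particular the window
  sums of a bounded sequence are bounded, so W(x,n) is a genuine supremum.\<close>
lemma window_norm_le:
  assumes "\<And>k. norm (x k) \<le> M"
  shows "norm (\<Sum>i<n. x (i + j)) \<le> real n * M"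
proof -
  have "norm (\<Sum>i<n. x (i + j)) \<le> (\<Sum>i<n. norm (x (i + j)))" by (rule norm_sum)
  also have "\<dots> \<le> real n * M" using sum_bounded_above[of "{..<n}", OF assms] by simp
  finally show ?thesis .
qed

lemma window_norms_bdd:
  assumes "x \<in> linf"
  shows "bdd_above (range (\<lambda>j. norm (\<Sum>i<n. x (i + j))))"
proof -
  obtain M where "\<And>k. norm (x k) \<le> M" using assms by (metis linfE)
  then have "\<And>j. norm (\<Sum>i<n. x (i + j)) \<le> real n * M" by (rule window_norm_le)
  then show ?thesis by (rule bdd_aboveI2)
qed

lemma max_window_upper:
  "x \<in> linf \<Longrightarrow> norm (\<Sum>i<n. x (i + j)) \<le> max_window x n"
  unfolding max_window_def by (rule cSUP_upper2[OF window_norms_bdd]) auto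

lemma max_window_least:
  "(\<And>j. norm (\<Sum>i<n. x (i + j)) \<le> B) \<Longrightarrow> max_window x n \<le> B"
  unfolding max_window_def by (rule cSUP_least) auto

lemma max_window_nonneg: "x \<in> linf \<Longrightarrow> 0 \<le> max_window x n"
  using max_window_upper[where x = x and n = n and j = 0] by (meson norm_ge_zero order_trans)

lemma max_window_le_sup_norm: "x \<in> linf \<Longrightarrow> max_window x n \<le> real n * sup_norm x"
  by (intro max_window_least window_norm_le sup_norm_upper)

lemma window_sum_split:
  fixes x :: "nat \<Rightarrow> 'a::comm_monoid_add"
  shows "(\<Sum>i<m + n. x (i + j)) = (\<Sum>i<m. x (i + j)) + (\<Sum>i<n. x (i + (m + j)))"
  by (induction n) (simp_all add: ac_simps)

lemma max_window_subadditive: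
  assumes "x \<in> linf"
  shows "max_window x (m + n) \<le> max_window x m + max_window x n"
proof (rule max_window_least)
  fix j
  have "norm (\<Sum>i<m + n. x (i + j))
      \<le> norm (\<Sum>i<m. x (i + j)) + norm (\<Sum>i<n. x (i + (m + j)))"
    unfolding window_sum_split by (rule norm_triangle_ineq)
  also have "\<dots> \<le> max_window x m + max_window x n"
    using assms by (intro add_mono max_window_upper)
  finally show "norm (\<Sum>i<m + n. x (i + j)) \<le> max_window x m + max_window x n" .
qed

lemma SUP_divide_const:
  fixes f :: "'b \<Rightarrow> real"
  assumes "bdd_above (range f)" and "c > 0"
  shows "(SUP j. f j / c) = (SUP j. f j) / c"
proof -
  have "mono (\<lambda>t. t / c)" using assms(2) by (simp add: mono_def divide_right_mono)
  then have "(SUP j. f j) / c = (SUP t\<in>range f. t / c)"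
    by (rule continuous_at_Sup_mono) (use assms in \<open>(intro continuous_intros)?, auto\<close>)
  then show ?thesis by (simp add: image_image)
qed

lemma window_average_eq:
  assumes "x \<in> linf"
  shows "(SUP j. norm (\<Sum>i<n. x (i + j)) / real n) = max_window x n / real n"
proof (cases "n = 0")
  case False
  then show ?thesis unfolding max_window_def
    by (intro SUP_divide_const window_norms_bdd assms) simp
qed simp

lemma p_func_LIMSEQ:
  assumes "x \<in> linf"
  shows "(\<lambda>n. max_window x n / real n) \<longlonglongrightarrow> p_func x"
proof -
  have "convergent (\<lambda>n. max_window x n / real n)"
    using assms by (intro fekete_subadditive max_window_subadditive max_window_nonneg)
  then show ?thesis
    unfolding p_func_def window_average_eq[OF assms] by (simp add: convergent_LIMSEQ_iff)
qed

lemma p_func_le_sup_norm: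
  assumes "x \<in> linf"
  shows "p_func x \<le> sup_norm x"
proof (rule LIMSEQ_le_const2[OF p_func_LIMSEQ[OF assms]])
  have "max_window x n / real n \<le> sup_norm x" if "n \<ge> 1" for n
    using max_window_le_sup_norm[OF assms, of n] that by (simp add: field_simps)
  then show "\<exists>N. \<forall>n\<ge>N. max_window x n / real n \<le> sup_norm x" by blast
qed

lemma p_func_bounded_windows:
  assumes "x \<in> linf" and bound: "\<And>n j. norm (\<Sum>i<n. x (i + j)) \<le> B"
  shows "p_func x = 0"
proof -
  have "(\<lambda>n. max_window x n / real n) \<longlonglongrightarrow> 0"
  proof (rule tendsto_sandwich[OF _ _ tendsto_const])
    show "\<forall>\<^sub>F n in sequentially. 0 \<le> max_window x n / real n"
      using max_window_nonneg[OF assms(1)] by simp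
    show "\<forall>\<^sub>F n in sequentially. max_window x n / real n \<le> B / real n"
      using max_window_least[OF bound] by (simp add: divide_right_mono)
    show "(\<lambda>n. B / real n) \<longlonglongrightarrow> 0"
      by (rule tendsto_divide_0[OF tendsto_const])
        (rule filterlim_at_top_imp_at_infinity[OF filterlim_real_sequentially])
  qed
  then show ?thesis using p_func_LIMSEQ[OF assms(1)] by (rule LIMSEQ_unique[symmetric])
qed

text \<open>In particular p vanishes on the difference sequence Tx - x, since its window sums
  telescope to x_(n+j) - x_j.\<close>
lemma p_func_shift_difference:
  assumes "x \<in> linf"
  shows "p_func (\<lambda>k. lshift x k - x k) = 0"
proof -
  obtain M where M: "\<And>k. norm (x k) \<le> M" using assms by (metis linfE)
  show ?thesis
  proof (rule p_func_bounded_windows)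
    show "(\<lambda>k. lshift x k - x k) \<in> linf" using assms by (intro linf_diff linf_lshift)
    fix n j
    have "(\<Sum>i<n. lshift x (i + j) - x (i + j)) = x (n + j) - x j"
      using sum_lessThan_telescope[of "\<lambda>i. x (i + j)" n] by (simp add: lshift_def)
    then show "norm (\<Sum>i<n. lshift x (i + j) - x (i + j)) \<le> 2 * M"
      using norm_triangle_ineq4[of "x (n + j)" "x j"] M[of "n + j"] M[of j] by simp
  qed
qed

context
  fixes L :: "(nat \<Rightarrow> 'a::complex_normed_vector) \<Rightarrow> complex"
  assumes L: "L \<in> linf_dual"
begin

lemma dual_add: "x \<in> linf \<Longrightarrow> y \<in> linf \<Longrightarrow> L (\<lambda>n. x n + y n) = L x + L y"
  using L unfolding linf_dual_def by blast

lemma dual_scaleR: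
  assumes "x \<in> linf"
  shows "L (\<lambda>n. r *\<^sub>R x n) = of_real r * L x"
proof -
  have "L (\<lambda>n. of_real r *\<^sub>C x n) = of_real r * L x"
    using L assms unfolding linf_dual_def by blast
  then show ?thesis by (simp only: scaleC_of_real)
qed

lemma dual_diff:
  assumes x: "x \<in> linf" and y: "y \<in> linf"
  shows "L (\<lambda>n. x n - y n) = L x - L y"
proof -
  have "L x = L (\<lambda>n. (x n - y n) + y n)" by simp
  also have "\<dots> = L (\<lambda>n. x n - y n) + L y" by (rule dual_add[OF linf_diff[OF x y] y])
  finally show ?thesis by simp
qed

lemma dual_sum:
  fixes y :: "nat \<Rightarrow> nat \<Rightarrow> 'a"
  shows "(\<And>i. y i \<in> linf) \<Longrightarrow> L (\<lambda>k. \<Sum>i<n. y i k) = (\<Sum>i<n. L (y i))"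
proof (induction n)
  case 0
  have zero: "(\<lambda>k. 0) \<in> linf" by (rule linfI[of _ 0]) simp
  show ?case using dual_diff[OF zero zero] by simp
next
  case (Suc n)
  then show ?case using dual_add[OF linf_sum[OF Suc.prems] Suc.prems[of n]] by simp
qed

text \<open>A shift-invariant functional is invariant under all shifts and therefore takes the
  value L x on every window average of x.\<close>
lemma shift_invariant_window_average:
  assumes shift: "\<And>x. x \<in> linf \<Longrightarrow> L (lshift x) = L x"
    and x: "x \<in> linf" and n: "n \<ge> 1"
  shows "L (\<lambda>j. (1 / real n) *\<^sub>R (\<Sum>i<n. x (i + j))) = L x"
proof -
  have offset: "L (\<lambda>k. x (i + k)) = L x" for i
  proof (induction i)
    case (Suc i)
    have "(\<lambda>k. x (Suc i + k)) = lshift (\<lambda>k. x (i + k))" by (simp add: lshift_def)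
    then show ?case using shift[OF linf_offset[OF x]] Suc by simp
  qed simp
  have "L (\<lambda>j. \<Sum>i<n. x (i + j)) = of_nat n * L x"
    using dual_sum[of "\<lambda>i k. x (i + k)" n] linf_offset[OF x] offset by simp
  moreover have "(\<lambda>j. \<Sum>i<n. x (i + j)) \<in> linf" by (intro linf_sum linf_offset x)
  ultimately show ?thesis using n by (simp add: dual_scaleR)
qed

end

text \<open>The norm bound of a Banach limit, applied to window averages, bounds |L x| by W(x,n)/n.\<close>
lemma banach_limit_le_window:
  assumes "banach_limit L" and x: "x \<in> linf" and n: "n \<ge> 1"
  shows "cmod (L x) \<le> max_window x n / real n"
proof -
  define y where "y = (\<lambda>j. (1 / real n) *\<^sub>R (\<Sum>i<n. x (i + j)))"
  have "y \<in> linf" unfolding y_def by (intro linf_scaleR linf_sum linf_offset x)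
  then have "cmod (L y) \<le> sup_norm y" using assms(1) unfolding banach_limit_def by blast
  also have "sup_norm y \<le> max_window x n / real n"
  proof (rule sup_norm_least)
    fix j
    have "norm (\<Sum>i<n. x (i + j)) \<le> max_window x n" by (rule max_window_upper[OF x])
    then show "norm (y j) \<le> max_window x n / real n"
      unfolding y_def by (simp add: divide_right_mono)
  qed
  moreover have "L y = L x"
    using assms(1) unfolding y_def banach_limit_def
    by (intro shift_invariant_window_average[OF _ _ x n]) auto
  ultimately show ?thesis by simp
qed

theorem mainTheorem8:
  fixes L :: "(nat \<Rightarrow> 'a::complex_normed_vector) \<Rightarrow> complex"
  assumes "L \<in> linf_dual"
  shows "banach_limit L \<longleftrightarrow> (\<forall>x\<in>linf. cmod (L x) \<le> p_func x)"
proof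
  assume banach: "banach_limit L"
  have "cmod (L x) \<le> p_func x" if x: "x \<in> linf" for x
    using banach_limit_le_window[OF banach x]
    by (intro LIMSEQ_le_const[OF p_func_LIMSEQ[OF x]] exI[of _ 1]) auto
  then show "\<forall>x\<in>linf. cmod (L x) \<le> p_func x" by blast
next
  assume p_bound: "\<forall>x\<in>linf. cmod (L x) \<le> p_func x"
  have "cmod (L x) \<le> sup_norm x" if "x \<in> linf" for x
    using p_bound p_func_le_sup_norm that by (meson order_trans)
  moreover have "L (lshift x) = L x" if x: "x \<in> linf" for x
  proof -
    have "cmod (L (\<lambda>k. lshift x k - x k)) \<le> 0"
      using p_bound p_func_shift_difference[OF x] linf_diff[OF linf_lshift x] x by metis
    then show ?thesis using dual_diff[OF assms linf_lshift x] x by simp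
  qed
  ultimately show "banach_limit L" unfolding banach_limit_def using assms by blast
qed

end
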